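(* Under the standing assumptions, assume $n> m$ and that all kept singular values $S_{kk}$ are strictly positive. Set $\widetilde{dU}_2:=(\mathbb{1}_n-UU^\dagger)dU$ and $\widetilde{dV}_2:=(\mathbb{1}_m-VV^\dagger)dV$. Then $\widetilde{dV}_2$ satisfies the Sylvester equation $$\widetilde{dV}_2\,S^2-A^\dagger A\,\widetilde{dV}_2=(\mathbb{1}_m-VV^\dagger)\,dA^\dagger U S+A^\dagger(\mathbb{1}_n-UU^\dagger)\,dA\,V,$$ and $$\widetilde{dU}_2=(\mathbb{1}_n-UU^\dagger)\,dA\,V S^{-1}+A\,\widetilde{dV}_2\,S^{-1}.$$
   Context: Let $n,m\ge1$, $r=\min(n,m)$ and $1\le t<r$. Let $\tau\mapsto A(\tau)\in\mathbb{C}^{n\times m}$ be differentiable, and suppose there are differentiable maps $\tau\mapsto U\in\mathbb{C}^{n\times t}$, $S\in\mathbb{R}^{t\times t}$, $V\in\mathbb{C}^{m\times t}$, $U_\perp\in\mathbb{C}^{n\times(r-t)}$, $S_\perp\in\mathbb{R}^{(r-t)\times(r-t)}$, $V_\perp\in\mathbb{C}^{m\times(r-t)}$ such that for every $\tau$: $A=USV^\dagger+U_\perp S_\perp V_\perp^\dagger$ is a (thin) singular value decomposition, i.e. $S,S_\perp$ are diagonal with nonnegative entries, $(U\,|\,U_\perp)$ and $(V\,|\,V_\perp)$ have orthonormal columns. Here $d$ denotes the derivative with respect to $\tau$, $^\dagger$ the conjugate transpose, $\mathbb{1}_k$ the $k\times k$ identity. *)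

theory Defs
  imports "HOL-Analysis.Analysis"
begin

definition cadj :: "complex^'c^'r \<Rightarrow> complex^'r^'c" where
  "cadj M = (\<chi> i j. cnj (M $ j $ i))"

definition cmat :: "real^'c^'r \<Rightarrow> complex^'c^'r" where
  "cmat M = (\<chi> i j. complex_of_real (M $ i $ j))"

definition nonneg_diag :: "real^'k^'k \<Rightarrow> bool" where
  "nonneg_diag M \<longleftrightarrow> (\<forall>i j. i \<noteq> j \<longrightarrow> M $ i $ j = 0) \<and> (\<forall>i. M $ i $ i \<ge> 0)"

end

theory Submission
  imports Defs
begin

text \<open>The SVD gives \<open>A V = U S\<close> and \<open>A\<^sup>\<dagger> U = V S\<close>. Differentiating both identities
  and multiplying from the left by the complementary projectors \<open>P\<^sub>U = 1 - U U\<^sup>\<dagger>\<close> and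
  \<open>P\<^sub>V = 1 - V V\<^sup>\<dagger>\<close> removes the \<open>dS\<close> terms; since \<open>P\<^sub>U A = A P\<^sub>V\<close>, what is left is the
  coupled system \<open>P\<^sub>U dU S = P\<^sub>U dA V + A P\<^sub>V dV\<close> and \<open>P\<^sub>V dV S = P\<^sub>V dA\<^sup>\<dagger> U + A\<^sup>\<dagger> P\<^sub>U dU\<close>.
  Substituting the first equation into the second one multiplied by \<open>S\<close> gives the
  Sylvester equation, and the first one solved for \<open>P\<^sub>U dU\<close> is the second claim.\<close>

lemma matrix_add_rdistrib: "((A::'a::semiring_1^'n^'m) + B) ** C = A ** C + B ** C"
  by (vector matrix_matrix_mult_def sum.distrib[symmetric] field_simps)

lemma matrix_diff_ldistrib: "(A::'a::ring_1^'n^'m) ** (B - C) = A ** B - A ** C"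
  by (vector matrix_matrix_mult_def sum_subtractf[symmetric] field_simps)

lemma matrix_diff_rdistrib: "((A::'a::ring_1^'n^'m) - B) ** C = A ** C - B ** C"
  by (vector matrix_matrix_mult_def sum_subtractf[symmetric] field_simps)

lemma matrix_mult_right_inverse:
  fixes A :: "'a::semiring_1^'n^'m"
  assumes "invertible A"
  shows "A ** matrix_inv A = mat 1"
  using someI_ex[OF assms[unfolded invertible_def]] by (simp add: matrix_inv_def)

lemma bounded_bilinear_matrix_mult:
  "bounded_bilinear ((**) :: 'a::{euclidean_space,real_algebra_1}^'n^'m \<Rightarrow> 'a^'p^'n \<Rightarrow> 'a^'p^'m)"
  unfolding bilinear_conv_bounded_bilinear[symmetric] bilinear_def
  by (auto intro!: linearI simp: matrix_add_ldistrib matrix_add_rdistrib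
      scalar_matrix_assoc[symmetric] matrix_scalar_ac)

lemma has_vector_derivative_matrix_mult:
  fixes f :: "real \<Rightarrow> 'a::{euclidean_space,real_algebra_1}^'n^'m" and g :: "real \<Rightarrow> 'a^'p^'n"
  assumes "(f has_vector_derivative f') (at x)" "(g has_vector_derivative g') (at x)"
  shows "((\<lambda>x. f x ** g x) has_vector_derivative f x ** g' + f' ** g x) (at x)"
  using bounded_bilinear.has_vector_derivative[OF bounded_bilinear_matrix_mult assms] by simp

lemma product_identity_derivative:
  fixes F :: "real \<Rightarrow> 'a::{euclidean_space,real_algebra_1}^'n^'m" and G :: "real \<Rightarrow> 'a^'p^'n"
    and H :: "real \<Rightarrow> 'a^'q^'m" and K :: "real \<Rightarrow> 'a^'p^'q"
  assumes "\<And>x. F x ** G x = H x ** K x"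
    and "(F has_vector_derivative F') (at \<tau>)" "(G has_vector_derivative G') (at \<tau>)"
    and "(H has_vector_derivative H') (at \<tau>)" "(K has_vector_derivative K') (at \<tau>)"
  shows "F \<tau> ** G' + F' ** G \<tau> = H \<tau> ** K' + H' ** K \<tau>"
proof (rule vector_derivative_unique_at)
  show "((\<lambda>x. F x ** G x) has_vector_derivative F \<tau> ** G' + F' ** G \<tau>) (at \<tau>)"
    using has_vector_derivative_matrix_mult assms(2,3) .
  show "((\<lambda>x. F x ** G x) has_vector_derivative H \<tau> ** K' + H' ** K \<tau>) (at \<tau>)"
    unfolding assms(1) using has_vector_derivative_matrix_mult assms(4,5) .
qed

lemma cadj_matrix_mult: "cadj ((A::complex^'n^'m) ** B) = cadj B ** cadj A"
  by (vector cadj_def matrix_matrix_mult_def mult.commute)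

lemma cadj_cadj [simp]: "cadj (cadj A) = A"
  by (vector cadj_def)

lemma cadj_add: "cadj (A + B) = cadj A + cadj B"
  by (vector cadj_def)

lemma cadj_zero [simp]: "cadj 0 = 0"
  by (vector cadj_def)

lemma cadj_cmat: "cadj (cmat D) = cmat (transpose D)"
  by (vector cadj_def cmat_def transpose_def)

lemma bounded_linear_cadj: "bounded_linear (cadj :: complex^'n^'m \<Rightarrow> complex^'m^'n)"
  unfolding linear_conv_bounded_linear[symmetric]
  by (rule linearI) (vector cadj_def scaleR_conv_of_real)+

lemma bounded_linear_cmat: "bounded_linear (cmat :: real^'n^'m \<Rightarrow> complex^'n^'m)"
  unfolding linear_conv_bounded_linear[symmetric]
  by (rule linearI) (vector cmat_def scaleR_conv_of_real)+

lemma nonneg_diag_transpose: "nonneg_diag D \<Longrightarrow> transpose D = D"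
  unfolding nonneg_diag_def by (vector transpose_def) metis

lemma invertible_cmat_diagonal:
  fixes D :: "real^'n^'n"
  assumes "\<And>i j. i \<noteq> j \<Longrightarrow> D $ i $ j = 0" and "\<And>i. D $ i $ i \<noteq> 0"
  shows "invertible (cmat D)"
proof -
  have "det (cmat D) = (\<Prod>i\<in>UNIV. complex_of_real (D $ i $ i))"
    by (subst det_diagonal) (simp_all add: cmat_def assms(1))
  then show ?thesis
    by (simp add: invertible_det_nz assms(2))
qed

definition compl_proj :: "complex^'k^'n \<Rightarrow> complex^'n^'n" where
  "compl_proj U = mat 1 - U ** cadj U"

lemma compl_proj_annihilates:
  assumes "cadj U ** U = mat 1"
  shows "compl_proj U ** U = 0"
  by (simp add: compl_proj_def matrix_diff_rdistrib matrix_mul_assoc[symmetric] assms)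

lemma thin_svd_mult_right:
  assumes "A = U ** cmat S ** cadj V + Up ** cmat Sp ** cadj Vp"
    and "cadj V ** V = mat 1" and "cadj V ** Vp = 0"
  shows "A ** V = U ** cmat S"
proof -
  have "cadj Vp ** V = 0"
    by (metis assms(3) cadj_matrix_mult cadj_cadj cadj_zero)
  then show ?thesis
    by (simp add: assms(1,2) matrix_add_rdistrib matrix_mul_assoc[symmetric])
qed

lemma thin_svd_cadj:
  assumes "A = U ** cmat S ** cadj V + Up ** cmat Sp ** cadj Vp"
    and "transpose S = S" and "transpose Sp = Sp"
  shows "cadj A = V ** cmat S ** cadj U + Vp ** cmat Sp ** cadj Up"
  by (simp add: assms cadj_add cadj_matrix_mult cadj_cmat matrix_mul_assoc)

lemma compl_proj_intertwines:
  assumes "A ** V = U ** S" and "cadj A ** U = V ** S" and "cadj S = S"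
  shows "compl_proj U ** A = A ** compl_proj V"
proof -
  have "cadj U ** A = S ** cadj V"
    by (metis assms(2,3) cadj_matrix_mult cadj_cadj)
  then have "compl_proj U ** A = A - U ** S ** cadj V"
    by (simp add: compl_proj_def matrix_diff_rdistrib matrix_mul_assoc[symmetric])
  also have "\<dots> = A ** compl_proj V"
    by (simp add: compl_proj_def matrix_diff_ldistrib matrix_mul_assoc assms(1))
  finally show ?thesis .
qed

lemma projected_derivative_identity:
  assumes "A ** dV + dA ** V = U ** dS + dU ** S"
    and "P ** U = 0" and "P ** A = A ** Q"
  shows "P ** dU ** S = P ** dA ** V + A ** (Q ** dV)"
proof -
  have "P ** (A ** dV + dA ** V) = P ** (U ** dS + dU ** S)"
    using assms(1) by simp
  then show ?thesis
    by (simp add: matrix_add_ldistrib matrix_mul_assoc assms(2,3) add.commute)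
qed

lemma coupled_equations_sylvester:
  fixes X :: "'a::comm_ring_1^'k^'m"
  assumes "Y ** S = B + A ** X" and "X ** S = C + A' ** Y"
  shows "X ** (S ** S) - A' ** A ** X = C ** S + A' ** B"
proof -
  have "X ** (S ** S) = C ** S + A' ** (Y ** S)"
    by (metis assms(2) matrix_add_rdistrib matrix_mul_assoc)
  also have "\<dots> = C ** S + A' ** B + A' ** A ** X"
    by (simp add: assms(1) matrix_add_ldistrib matrix_mul_assoc add.assoc)
  finally show ?thesis
    by simp
qed

lemma solve_right_invertible:
  fixes Y :: "'a::comm_ring_1^'k^'n"
  assumes "Y ** S = B + A ** X" and "S ** Sinv = mat 1"
  shows "Y = B ** Sinv + A ** X ** Sinv"
proof -
  have "Y = Y ** S ** Sinv"
    by (simp add: matrix_mul_assoc[symmetric] assms(2))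
  then show ?thesis
    by (simp add: assms(1) matrix_add_rdistrib)
qed

theorem mainTheorem8:
  fixes A :: "real \<Rightarrow> complex^'m^'n"
    and U :: "real \<Rightarrow> complex^'t^'n" and S :: "real \<Rightarrow> real^'t^'t" and V :: "real \<Rightarrow> complex^'t^'m"
    and Up :: "real \<Rightarrow> complex^'s^'n" and Sp :: "real \<Rightarrow> real^'s^'s" and Vp :: "real \<Rightarrow> complex^'s^'m"
  assumes dims: "CARD('t) + CARD('s) = min CARD('n) CARD('m)"
    and nm: "CARD('n) > CARD('m)"
    and diff: "\<And>\<tau>. A differentiable (at \<tau>)" "\<And>\<tau>. U differentiable (at \<tau>)"
      "\<And>\<tau>. S differentiable (at \<tau>)" "\<And>\<tau>. V differentiable (at \<tau>)"
      "\<And>\<tau>. Up differentiable (at \<tau>)" "\<And>\<tau>. Sp differentiable (at \<tau>)"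
      "\<And>\<tau>. Vp differentiable (at \<tau>)"
    and svd: "\<And>\<tau>. A \<tau> = U \<tau> ** cmat (S \<tau>) ** cadj (V \<tau>) + Up \<tau> ** cmat (Sp \<tau>) ** cadj (Vp \<tau>)"
    and diagS: "\<And>\<tau>. nonneg_diag (S \<tau>)" and diagSp: "\<And>\<tau>. nonneg_diag (Sp \<tau>)"
    and orthU: "\<And>\<tau>. cadj (U \<tau>) ** U \<tau> = mat 1" "\<And>\<tau>. cadj (Up \<tau>) ** Up \<tau> = mat 1"
      "\<And>\<tau>. cadj (U \<tau>) ** Up \<tau> = 0"
    and orthV: "\<And>\<tau>. cadj (V \<tau>) ** V \<tau> = mat 1" "\<And>\<tau>. cadj (Vp \<tau>) ** Vp \<tau> = mat 1"
      "\<And>\<tau>. cadj (V \<tau>) ** Vp \<tau> = 0"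
    and Spos: "\<And>\<tau> k. S \<tau> $ k $ k > 0"
  shows "\<forall>\<tau>.
    (let dA = vector_derivative A (at \<tau>); dU = vector_derivative U (at \<tau>);
         dV = vector_derivative V (at \<tau>);
         Sc = cmat (S \<tau>); Sinv = matrix_inv (cmat (S \<tau>));
         PU = (mat 1 :: complex^'n^'n) - U \<tau> ** cadj (U \<tau>);
         PV = (mat 1 :: complex^'m^'m) - V \<tau> ** cadj (V \<tau>);
         dU2 = PU ** dU; dV2 = PV ** dV
     in dV2 ** (Sc ** Sc) - cadj (A \<tau>) ** A \<tau> ** dV2
          = PV ** cadj dA ** U \<tau> ** Sc + cadj (A \<tau>) ** PU ** dA ** V \<tau>
      \<and> dU2 = PU ** dA ** V \<tau> ** Sinv + A \<tau> ** dV2 ** Sinv)"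
proof (intro allI, goal_cases)
  case (1 \<tau>)
  \<comment> \<open>Only the kept triplet enters: neither the dimension hypotheses nor any property of
    \<open>Up\<close>, \<open>Sp\<close>, \<open>Vp\<close> beyond orthogonality to \<open>U\<close>, \<open>V\<close> and diagonality of \<open>Sp\<close> is needed.\<close>
  have AV: "A x ** V x = U x ** cmat (S x)" for x
    using thin_svd_mult_right[OF svd orthV(1,3)] .
  have AU: "cadj (A x) ** U x = V x ** cmat (S x)" for x
    using thin_svd_mult_right[OF thin_svd_cadj[OF svd] orthU(1,3)]
    by (simp add: nonneg_diag_transpose diagS diagSp)
  have S_herm: "cadj (cmat (S \<tau>)) = cmat (S \<tau>)"
    by (simp add: cadj_cmat nonneg_diag_transpose diagS)
  define dA dU dV dS where "dA = vector_derivative A (at \<tau>)" and "dU = vector_derivative U (at \<tau>)"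
    and "dV = vector_derivative V (at \<tau>)" and "dS = vector_derivative S (at \<tau>)"
  have "(A has_vector_derivative dA) (at \<tau>)" "(U has_vector_derivative dU) (at \<tau>)"
    "(V has_vector_derivative dV) (at \<tau>)" "(S has_vector_derivative dS) (at \<tau>)"
    unfolding dA_def dU_def dV_def dS_def using diff vector_derivative_works by blast+
  note derivs = this(1-3) bounded_linear.has_vector_derivative[OF bounded_linear_cmat this(4)]
    bounded_linear.has_vector_derivative[OF bounded_linear_cadj this(1)]
  have F1: "compl_proj (U \<tau>) ** dU ** cmat (S \<tau>)
      = compl_proj (U \<tau>) ** dA ** V \<tau> + A \<tau> ** (compl_proj (V \<tau>) ** dV)"
    by (rule projected_derivative_identity[OF product_identity_derivative[OF AV derivs(1,3,2,4)]
          compl_proj_annihilates[OF orthU(1)] compl_proj_intertwines[OF AV AU S_herm]])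
  have F2: "compl_proj (V \<tau>) ** dV ** cmat (S \<tau>)
      = compl_proj (V \<tau>) ** cadj dA ** U \<tau> + cadj (A \<tau>) ** (compl_proj (U \<tau>) ** dU)"
    by (rule projected_derivative_identity[OF product_identity_derivative[OF AU derivs(5,2,3,4)]
          compl_proj_annihilates[OF orthV(1)] compl_proj_intertwines[OF AU _ S_herm]])
      (simp add: AV)
  have "cmat (S \<tau>) ** matrix_inv (cmat (S \<tau>)) = mat 1"
    using diagS[of \<tau>] Spos[of \<tau>] by (intro matrix_mult_right_inverse invertible_cmat_diagonal)
      (auto simp: nonneg_diag_def less_imp_neq[symmetric])
  then show ?case
    using coupled_equations_sylvester[OF F1 F2] solve_right_invertible[OF F1]
    by (simp add: Let_def dA_def dU_def dV_def compl_proj_def matrix_mul_assoc)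
qed

end
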